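(* Let $S$ be a semigroup with finite $\mathcal{R}$-height whose kernel (minimal two-sided ideal) is completely simple, and let $B$ be a bi-ideal of $S$. Let $n$ be the maximum length of a chain of $\mathcal{R}$-classes of $S$ each of which intersects $B$. Then $\mathrm{H}_{\mathcal{R}}(B)\leq 3n-2$.
   Context: For a semigroup $S$, $S^1$ denotes $S$ with an identity adjoined if necessary. Green's preorder: $a\leq_{\mathcal{R}} b$ iff $aS^1\subseteq bS^1$; $\mathcal{R}$ is the associated equivalence. $\mathcal{R}$-classes are ordered by $R_a\leq R_b$ iff $a\leq_{\mathcal{R}} b$, and the $\mathcal{R}$-height $\mathrm{H}_{\mathcal{R}}(S)$ is the supremum of the cardinalities of chains of $\mathcal{R}$-classes. A bi-ideal of $S$ is a non-empty subset $B$ with $BS^1B\subseteq B$; its $\mathcal{R}$-height is computed in the semigroup $B$ itself. The kernel of $S$ is its unique minimal ideal (which exists when $S$ has finite $\mathcal{R}$-height). A semigroup is completely simple if it has no proper ideals and possesses both a minimal right ideal and a minimal left ideal. *)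

theory Defs
  imports "HOL-Library.Extended_Nat"
begin

text \<open>The semigroup S is the whole type 'a (class semigroup_mult); sub-semigroups
  (bi-ideals, the kernel) are carriers T :: 'a set, closed under multiplication.\<close>

text \<open>Green's R-preorder computed inside the semigroup with carrier T:
  a \<le>_R b iff a T^1 \<subseteq> b T^1, i.e. a = b or a = b t for some t in T.\<close>
definition Rle :: "'a::semigroup_mult set \<Rightarrow> 'a \<Rightarrow> 'a \<Rightarrow> bool" where
  "Rle T a b \<longleftrightarrow> a = b \<or> (\<exists>t\<in>T. a = b * t)"

definition Req :: "'a::semigroup_mult set \<Rightarrow> 'a \<Rightarrow> 'a \<Rightarrow> bool" where
  "Req T a b \<longleftrightarrow> Rle T a b \<and> Rle T b a"

definition Rclass :: "'a::semigroup_mult set \<Rightarrow> 'a \<Rightarrow> 'a set" where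
  "Rclass T a = {b \<in> T. Req T a b}"

definition Rclasses :: "'a::semigroup_mult set \<Rightarrow> 'a set set" where
  "Rclasses T = Rclass T ` T"

text \<open>R-classes are ordered by R_a \<le> R_b iff a \<le>_R b (independent of representatives).\<close>
definition Rclass_le :: "'a::semigroup_mult set \<Rightarrow> 'a set \<Rightarrow> 'a set \<Rightarrow> bool" where
  "Rclass_le T X Y \<longleftrightarrow> (\<exists>a\<in>X. \<exists>b\<in>Y. Rle T a b)"

definition Rchain :: "'a::semigroup_mult set \<Rightarrow> 'a set set \<Rightarrow> bool" where
  "Rchain T C \<longleftrightarrow> C \<subseteq> Rclasses T \<and>
     (\<forall>X\<in>C. \<forall>Y\<in>C. Rclass_le T X Y \<or> Rclass_le T Y X)"

text \<open>R-height: supremum of the cardinalities of chains of R-classes (infinite chains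
  yield arbitrarily large finite subchains, so it suffices to take finite ones).\<close>
definition R_height :: "'a::semigroup_mult set \<Rightarrow> enat" where
  "R_height T = Sup {enat (card C) | C. finite C \<and> Rchain T C}"

definition ideal_in :: "'a::semigroup_mult set \<Rightarrow> 'a set \<Rightarrow> bool" where
  "ideal_in T I \<longleftrightarrow> I \<noteq> {} \<and> I \<subseteq> T \<and> (\<forall>t\<in>T. \<forall>x\<in>I. t * x \<in> I \<and> x * t \<in> I)"

definition right_ideal_in :: "'a::semigroup_mult set \<Rightarrow> 'a set \<Rightarrow> bool" where
  "right_ideal_in T I \<longleftrightarrow> I \<noteq> {} \<and> I \<subseteq> T \<and> (\<forall>t\<in>T. \<forall>x\<in>I. x * t \<in> I)"

definition left_ideal_in :: "'a::semigroup_mult set \<Rightarrow> 'a set \<Rightarrow> bool" where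
  "left_ideal_in T I \<longleftrightarrow> I \<noteq> {} \<and> I \<subseteq> T \<and> (\<forall>t\<in>T. \<forall>x\<in>I. t * x \<in> I)"

definition minimal_right_ideal_in :: "'a::semigroup_mult set \<Rightarrow> 'a set \<Rightarrow> bool" where
  "minimal_right_ideal_in T I \<longleftrightarrow> right_ideal_in T I \<and>
     (\<forall>J. right_ideal_in T J \<and> J \<subseteq> I \<longrightarrow> J = I)"

definition minimal_left_ideal_in :: "'a::semigroup_mult set \<Rightarrow> 'a set \<Rightarrow> bool" where
  "minimal_left_ideal_in T I \<longleftrightarrow> left_ideal_in T I \<and>
     (\<forall>J. left_ideal_in T J \<and> J \<subseteq> I \<longrightarrow> J = I)"

definition is_kernel :: "'a::semigroup_mult set \<Rightarrow> bool" where
  "is_kernel K \<longleftrightarrow> ideal_in UNIV K \<and> (\<forall>J. ideal_in UNIV J \<and> J \<subseteq> K \<longrightarrow> J = K)"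

definition completely_simple :: "'a::semigroup_mult set \<Rightarrow> bool" where
  "completely_simple T \<longleftrightarrow> T \<noteq> {} \<and> (\<forall>x\<in>T. \<forall>y\<in>T. x * y \<in> T) \<and>
     (\<forall>I. ideal_in T I \<longrightarrow> I = T) \<and>
     (\<exists>R. minimal_right_ideal_in T R) \<and> (\<exists>L. minimal_left_ideal_in T L)"

definition bi_ideal :: "'a::semigroup_mult set \<Rightarrow> bool" where
  "bi_ideal B \<longleftrightarrow> B \<noteq> {} \<and> (\<forall>a\<in>B. \<forall>b\<in>B. a * b \<in> B \<and> (\<forall>s. a * s * b \<in> B))"

end

theory Submission
  imports Defs
begin

(*
  Enumerate a chain of R-classes of B from the top by representatives
  a_0 >_B a_1 >_B ... >_B a_(N-1).  If a_(i+1) = a_i u and a_j = a_(i+2) v with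
  u, v in B, then a_i \<le>_S a_j would give a_(i+1) \<le>_B a_(i+2), because
  v S u \<subseteq> B.  Hence a_0, a_3, a_6, ... (above a_(N-1)) lie in pairwise
  distinct R-classes of S.  One further R-class of S lies strictly below them
  and meets B: that of a_(N-1) if a_(N-1) is in the kernel K, and that of
  a_(N-1) k a_(N-1) for some k in K otherwise.  This uses that \<le>_S and \<le>_B
  agree on B \<inter> K, which holds since every y in the completely simple K is
  regular and lies in y y K.  So (N + 1) div 3 + 1 \<le> n, i.e. N \<le> 3 n - 2.
*)

lemma finite_strict_total_enumeration:
  fixes less :: "'a \<Rightarrow> 'a \<Rightarrow> bool"
  assumes fin: "finite A"
    and trans: "\<And>x y z. less x y \<Longrightarrow> less y z \<Longrightarrow> less x z"
    and irrefl: "\<And>x. \<not> less x x"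
    and total: "\<And>x y. x \<in> A \<Longrightarrow> y \<in> A \<Longrightarrow> x \<noteq> y \<Longrightarrow> less x y \<or> less y x"
  obtains f where "f ` {..<card A} = A" "\<And>i j. i < j \<Longrightarrow> j < card A \<Longrightarrow> less (f j) (f i)"
proof -
  define rank where "rank x = card {y \<in> A. less x y}" for x
  have rank_less: "rank y < rank x" if "less x y" "y \<in> A" for x y
  proof -
    have "{z \<in> A. less y z} \<subset> {z \<in> A. less x z}" using that trans irrefl by blast
    then show ?thesis unfolding rank_def using fin by (simp add: psubset_card_mono)
  qed
  have inj: "inj_on rank A"
    by (rule inj_onI) (metis total rank_less less_irrefl)
  have "rank x < card A" if "x \<in> A" for x
  proof -
    have "{y \<in> A. less x y} \<subset> A" using that irrefl by blast
    then show ?thesis unfolding rank_def using fin by (simp add: psubset_card_mono)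
  qed
  then have rank_onto: "rank ` A = {..<card A}"
    by (intro card_subset_eq) (auto simp: card_image[OF inj])
  define f where "f = the_inv_into A rank"
  have rank_f: "rank (f i) = i" and f_mem: "f i \<in> A" if "i < card A" for i
    using that rank_onto f_the_inv_into_f[OF inj] the_inv_into_into[OF inj]
    by (auto simp: f_def)
  show thesis
  proof
    show "f ` {..<card A} = A" using the_inv_into_onto[OF inj] by (simp add: f_def rank_onto)
  next
    fix i j assume "i < j" "j < card A"
    then show "less (f j) (f i)"
      using total[OF f_mem f_mem] rank_f rank_less[OF _ f_mem] by (metis less_trans not_less_iff_gr_or_eq)
  qed
qed

definition Rless :: "'a::semigroup_mult set \<Rightarrow> 'a \<Rightarrow> 'a \<Rightarrow> bool" where
  "Rless T a b \<longleftrightarrow> Rle T a b \<and> \<not> Rle T b a"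

definition R_strict_chain :: "'a::semigroup_mult set \<Rightarrow> 'a set \<Rightarrow> bool" where
  "R_strict_chain T A \<longleftrightarrow> A \<subseteq> T \<and> (\<forall>x\<in>A. \<forall>y\<in>A. x \<noteq> y \<longrightarrow> Rless T x y \<or> Rless T y x)"

lemma Rle_refl [simp]: "Rle T a a"
  by (simp add: Rle_def)

lemma Rle_trans:
  assumes closed: "\<forall>x\<in>T. \<forall>y\<in>T. x * y \<in> T" and "Rle T a b" "Rle T b c"
  shows "Rle T a c"
proof -
  have "a = c * (s * t)" if "a = b * t" "b = c * s" for s t
    using that by (simp add: mult.assoc)
  then show ?thesis using assms unfolding Rle_def by blast
qed

lemma Rle_mono: "T \<subseteq> U \<Longrightarrow> Rle T a b \<Longrightarrow> Rle U a b"
  by (auto simp: Rle_def)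

lemma Rless_irrefl: "\<not> Rless T a a"
  by (simp add: Rless_def)

lemma Rless_trans:
  assumes "\<forall>x\<in>T. \<forall>y\<in>T. x * y \<in> T" and "Rless T a b" "Rless T b c"
  shows "Rless T a c"
  using assms Rle_trans[OF assms(1)] unfolding Rless_def by blast

lemma RlessE:
  assumes "Rless T a b"
  obtains t where "t \<in> T" "a = b * t"
  using assms by (auto simp: Rless_def Rle_def)

lemma Rclass_self: "x \<in> T \<Longrightarrow> x \<in> Rclass T x"
  by (simp add: Rclass_def Req_def)

lemma Rclass_le_iff:
  assumes closed: "\<forall>x\<in>T. \<forall>y\<in>T. x * y \<in> T" and "a \<in> T" "b \<in> T"
  shows "Rclass_le T (Rclass T a) (Rclass T b) \<longleftrightarrow> Rle T a b"
proof
  assume "Rclass_le T (Rclass T a) (Rclass T b)"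
  then obtain x y where "Rle T a x" "Rle T x y" "Rle T y b"
    by (auto simp: Rclass_le_def Rclass_def Req_def)
  then show "Rle T a b" using Rle_trans[OF closed] by blast
next
  assume "Rle T a b"
  then show "Rclass_le T (Rclass T a) (Rclass T b)"
    using assms Rclass_self unfolding Rclass_le_def by blast
qed

lemma R_strict_chain_classes:
  assumes "R_strict_chain T A"
  shows "Rchain T (Rclass T ` A)" "inj_on (Rclass T) A"
proof -
  have le: "Rclass_le T (Rclass T x) (Rclass T y)" if "x \<in> A" "y \<in> A" "Rle T x y" for x y
    using that assms Rclass_self unfolding Rclass_le_def R_strict_chain_def by blast
  have "Rle T x y \<or> Rle T y x" if "x \<in> A" "y \<in> A" for x y
    using assms that unfolding R_strict_chain_def Rless_def by (metis Rle_refl)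
  then show "Rchain T (Rclass T ` A)"
    using assms le unfolding Rchain_def Rclasses_def R_strict_chain_def by blast
  show "inj_on (Rclass T) A"
  proof (rule inj_onI, rule ccontr)
    fix x y assume xy: "x \<in> A" "y \<in> A" "Rclass T x = Rclass T y" "x \<noteq> y"
    then have "Req T x y" using assms Rclass_self[of y T]
      by (auto simp: R_strict_chain_def Rclass_def)
    then show False using assms xy by (auto simp: R_strict_chain_def Rless_def Req_def)
  qed
qed

lemma Rchain_strict_chain_reps:
  assumes closed: "\<forall>x\<in>T. \<forall>y\<in>T. x * y \<in> T" and "Rchain T C"
  obtains A where "R_strict_chain T A" "bij_betw (Rclass T) A C"
proof -
  have "C \<subseteq> Rclass T ` T" using assms(2) by (simp add: Rchain_def Rclasses_def)
  then obtain A where A: "A \<subseteq> T" "inj_on (Rclass T) A" "C = Rclass T ` A"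
    by (auto simp: subset_image_inj)
  have total: "Rless T x y \<or> Rless T y x" if "x \<in> A" "y \<in> A" "x \<noteq> y" for x y
  proof -
    have "Rclass_le T (Rclass T x) (Rclass T y) \<or> Rclass_le T (Rclass T y) (Rclass T x)"
      using assms(2) that A(3) by (simp add: Rchain_def)
    then have "Rle T x y \<or> Rle T y x"
      using Rclass_le_iff[OF closed] that A(1) by blast
    moreover have "Rclass T x \<noteq> Rclass T y" using A(2) that by (auto dest: inj_onD)
    then have "\<not> (Rle T x y \<and> Rle T y x)"
      using that A(1) Rle_trans[OF closed] unfolding Rclass_def Req_def by blast
    ultimately show ?thesis by (auto simp: Rless_def)
  qed
  show thesis by (rule that) (use A total in \<open>auto simp: R_strict_chain_def bij_betw_def\<close>)
qed

lemma Rchain_descending_enumeration: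
  assumes closed: "\<forall>x\<in>T. \<forall>y\<in>T. x * y \<in> T" and "finite C" "Rchain T C"
  obtains f where "f ` {..<card C} \<subseteq> T" "\<And>i j. i < j \<Longrightarrow> j < card C \<Longrightarrow> Rless T (f j) (f i)"
proof -
  obtain A where A: "R_strict_chain T A" "bij_betw (Rclass T) A C"
    using Rchain_strict_chain_reps[OF closed assms(3)] .
  have "finite A" and card_A: "card A = card C"
    using A(2) assms(2) by (auto simp: bij_betw_finite bij_betw_same_card)
  have total: "Rless T x y \<or> Rless T y x" if "x \<in> A" "y \<in> A" "x \<noteq> y" for x y
    using A(1) that by (simp add: R_strict_chain_def)
  obtain f where "f ` {..<card A} = A" "\<And>i j. i < j \<Longrightarrow> j < card A \<Longrightarrow> Rless T (f j) (f i)"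
    by (rule finite_strict_total_enumeration[of A "Rless T"])
      (use \<open>finite A\<close> Rless_trans[OF closed] Rless_irrefl total in blast)+
  then show thesis using that A(1) card_A by (auto simp: R_strict_chain_def)
qed

lemma R_height_le:
  assumes "\<And>C. finite C \<Longrightarrow> Rchain T C \<Longrightarrow> C \<noteq> {} \<Longrightarrow> card C \<le> m"
  shows "R_height T \<le> enat m"
  unfolding R_height_def
proof (intro Sup_least, clarify)
  fix C assume "finite C" "Rchain T C"
  then show "enat (card C) \<le> enat m" using assms by (cases "C = {}") auto
qed

lemma completely_simple_closed: "completely_simple K \<Longrightarrow> x \<in> K \<Longrightarrow> y \<in> K \<Longrightarrow> x * y \<in> K"
  by (simp add: completely_simple_def)

lemma completely_simple_sandwich:
  assumes cs: "completely_simple K" and "x \<in> K" "y \<in> K"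
  obtains k k' where "k \<in> K" "k' \<in> K" "y = k * x * k'"
proof -
  let ?I = "{k * x * k' | k k'. k \<in> K \<and> k' \<in> K}"
  have "t * z \<in> ?I \<and> z * t \<in> ?I" if "t \<in> K" "z \<in> ?I" for t z
  proof -
    obtain k k' where "k \<in> K" "k' \<in> K" "z = k * x * k'" using \<open>z \<in> ?I\<close> by blast
    moreover have "t * z = (t * k) * x * k'" "z * t = k * x * (k' * t)"
      using \<open>z = k * x * k'\<close> by (simp_all add: mult.assoc)
    ultimately show ?thesis using that cs by (blast intro: completely_simple_closed)
  qed
  moreover have "?I \<noteq> {}" "?I \<subseteq> K"
    using assms by (blast intro: completely_simple_closed)+
  ultimately have "ideal_in K ?I" unfolding ideal_in_def by blast
  then have "?I = K" using cs by (simp add: completely_simple_def)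
  then show thesis using that \<open>y \<in> K\<close> by blast
qed

lemma minimal_right_ideal_translate:
  assumes R: "minimal_right_ideal_in K R" and k: "k \<in> K"
    and closed: "\<forall>x\<in>K. \<forall>y\<in>K. x * y \<in> K"
  shows "minimal_right_ideal_in K ((*) k ` R)"
proof -
  have R_ideal: "right_ideal_in K R" and R_min: "\<And>J. right_ideal_in K J \<Longrightarrow> J \<subseteq> R \<Longrightarrow> J = R"
    using R by (auto simp: minimal_right_ideal_in_def)
  have "right_ideal_in K ((*) k ` R)"
    using R_ideal k closed unfolding right_ideal_in_def by (auto simp: mult.assoc image_iff)
  moreover have "(*) k ` R \<subseteq> J" if J: "right_ideal_in K J" "J \<subseteq> (*) k ` R" for J
  proof -
    have "right_ideal_in K {r \<in> R. k * r \<in> J}"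
      using R_ideal J unfolding right_ideal_in_def by (auto simp: mult.assoc[symmetric])
    then show ?thesis using R_min[of "{r \<in> R. k * r \<in> J}"] by blast
  qed
  ultimately show ?thesis unfolding minimal_right_ideal_in_def by blast
qed

lemma minimal_left_ideal_translate:
  assumes L: "minimal_left_ideal_in K L" and k: "k \<in> K"
    and closed: "\<forall>x\<in>K. \<forall>y\<in>K. x * y \<in> K"
  shows "minimal_left_ideal_in K ((\<lambda>l. l * k) ` L)"
proof -
  have L_ideal: "left_ideal_in K L" and L_min: "\<And>J. left_ideal_in K J \<Longrightarrow> J \<subseteq> L \<Longrightarrow> J = L"
    using L by (auto simp: minimal_left_ideal_in_def)
  have "left_ideal_in K ((\<lambda>l. l * k) ` L)"
    using L_ideal k closed unfolding left_ideal_in_def by (auto simp: mult.assoc[symmetric] image_iff)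
  moreover have "(\<lambda>l. l * k) ` L \<subseteq> J" if J: "left_ideal_in K J" "J \<subseteq> (\<lambda>l. l * k) ` L" for J
  proof -
    have "left_ideal_in K {l \<in> L. l * k \<in> J}"
      using L_ideal J unfolding left_ideal_in_def by (auto simp: mult.assoc)
    then show ?thesis using L_min[of "{l \<in> L. l * k \<in> J}"] by blast
  qed
  ultimately show ?thesis unfolding minimal_left_ideal_in_def by blast
qed

lemma minimal_right_ideal_eq_mult:
  assumes R: "minimal_right_ideal_in K R" and "x \<in> R"
    and closed: "\<forall>x\<in>K. \<forall>y\<in>K. x * y \<in> K"
  shows "(*) x ` K = R"
proof -
  have "right_ideal_in K ((*) x ` K)" "(*) x ` K \<subseteq> R"
    using R \<open>x \<in> R\<close> closed
    by (auto simp: minimal_right_ideal_in_def right_ideal_in_def mult.assoc image_iff)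
  then show ?thesis using R by (simp add: minimal_right_ideal_in_def)
qed

lemma minimal_left_ideal_eq_mult:
  assumes L: "minimal_left_ideal_in K L" and "x \<in> L"
    and closed: "\<forall>x\<in>K. \<forall>y\<in>K. x * y \<in> K"
  shows "(\<lambda>k. k * x) ` K = L"
proof -
  have "left_ideal_in K ((\<lambda>k. k * x) ` K)" "(\<lambda>k. k * x) ` K \<subseteq> L"
    using L \<open>x \<in> L\<close> closed
    by (auto simp: minimal_left_ideal_in_def left_ideal_in_def mult.assoc[symmetric] image_iff)
  then show ?thesis using L by (simp add: minimal_left_ideal_in_def)
qed

lemma completely_simple_right_square:
  assumes cs: "completely_simple K" and y: "y \<in> K"
  obtains u where "u \<in> K" "y = y * y * u"
proof -
  have closed: "\<forall>x\<in>K. \<forall>y\<in>K. x * y \<in> K" using cs by (simp add: completely_simple_def)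
  obtain R0 where R0: "minimal_right_ideal_in K R0" using cs by (auto simp: completely_simple_def)
  then obtain r where r: "r \<in> R0" "r \<in> K" by (auto simp: minimal_right_ideal_in_def right_ideal_in_def)
  obtain k k' where k: "k \<in> K" "k' \<in> K" "y = k * r * k'"
    using completely_simple_sandwich[OF cs r(2) y] .
  define R where "R = (*) k ` R0"
  have R: "minimal_right_ideal_in K R"
    unfolding R_def using minimal_right_ideal_translate[OF R0 k(1) closed] .
  have "y \<in> R"
    using R0 r k unfolding R_def by (auto simp: minimal_right_ideal_in_def right_ideal_in_def mult.assoc)
  then have "y * y \<in> R" using R y by (auto simp: minimal_right_ideal_in_def right_ideal_in_def)
  then have "y \<in> (*) (y * y) ` K" using minimal_right_ideal_eq_mult[OF R _ closed] \<open>y \<in> R\<close> by blast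
  then show thesis using that by blast
qed

lemma completely_simple_left_square:
  assumes cs: "completely_simple K" and y: "y \<in> K"
  obtains v where "v \<in> K" "y = v * y * y"
proof -
  have closed: "\<forall>x\<in>K. \<forall>y\<in>K. x * y \<in> K" using cs by (simp add: completely_simple_def)
  obtain L0 where L0: "minimal_left_ideal_in K L0" using cs by (auto simp: completely_simple_def)
  then obtain l where l: "l \<in> L0" "l \<in> K" by (auto simp: minimal_left_ideal_in_def left_ideal_in_def)
  obtain k k' where k: "k \<in> K" "k' \<in> K" "y = k * l * k'"
    using completely_simple_sandwich[OF cs l(2) y] .
  define L where "L = (\<lambda>z. z * k') ` L0"
  have L: "minimal_left_ideal_in K L"
    unfolding L_def using minimal_left_ideal_translate[OF L0 k(2) closed] .
  have "y \<in> L"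
    using L0 l k unfolding L_def by (auto simp: minimal_left_ideal_in_def left_ideal_in_def)
  then have "y * y \<in> L" using L y by (auto simp: minimal_left_ideal_in_def left_ideal_in_def)
  then have "y \<in> (\<lambda>v. v * (y * y)) ` K"
    using minimal_left_ideal_eq_mult[OF L _ closed] \<open>y \<in> L\<close> by blast
  then show thesis using that by (auto simp: mult.assoc)
qed

lemma completely_simple_regular:
  assumes cs: "completely_simple K" and x: "x \<in> K"
  obtains w where "w \<in> K" "x = x * w * x"
proof -
  obtain u where u: "u \<in> K" "x = x * x * u" using completely_simple_right_square[OF cs x] .
  obtain v where v: "x = v * x * x" using completely_simple_left_square[OF cs x] .
  have "x * u = v * x" using u(2) v by (metis mult.assoc)
  then have "x = x * u * x" using v by (simp add: mult.assoc)
  then show thesis using that u(1) by blast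
qed

lemma bi_ideal_closed: "bi_ideal B \<Longrightarrow> \<forall>x\<in>B. \<forall>y\<in>B. x * y \<in> B"
  by (simp add: bi_ideal_def)

lemma bi_ideal_Rle_sandwich:
  assumes B: "bi_ideal B" and "u \<in> B" "v \<in> B" and "Rle UNIV a (c * v)"
  shows "Rle B (a * u) c"
proof -
  consider "a = c * v" | s where "a = c * v * s"
    using \<open>Rle UNIV a (c * v)\<close> by (auto simp: Rle_def)
  then show ?thesis
  proof cases
    case 1
    then have "a * u = c * (v * u)" by (simp add: mult.assoc)
    then show ?thesis using B \<open>u \<in> B\<close> \<open>v \<in> B\<close> by (auto simp: Rle_def bi_ideal_def)
  next
    case 2
    then have "a * u = c * (v * s * u)" by (simp add: mult.assoc)
    then show ?thesis using B \<open>u \<in> B\<close> \<open>v \<in> B\<close> by (auto simp: Rle_def bi_ideal_def)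
  qed
qed

lemma completely_simple_Rle_bi_ideal:
  assumes cs: "completely_simple K" and B: "bi_ideal B"
    and x: "x \<in> B" "x \<in> K" and y: "y \<in> B" "y \<in> K" and "Rle UNIV x y"
  shows "Rle B x y"
proof (cases "x = y")
  case False
  then obtain s where s: "x = y * s" using \<open>Rle UNIV x y\<close> by (auto simp: Rle_def)
  obtain u where u: "y = y * y * u" using completely_simple_right_square[OF cs y(2)] .
  obtain w where w: "x = x * w * x" using completely_simple_regular[OF cs x(2)] .
  have "x = y * s * w * x" using w s by simp
  also have "\<dots> = y * (y * (u * s * w) * x)" by (subst u) (simp add: mult.assoc)
  finally have "x = y * (y * (u * s * w) * x)" .
  moreover have "y * (u * s * w) * x \<in> B" using B x y by (simp add: bi_ideal_def)
  ultimately show ?thesis by (auto simp: Rle_def)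
qed simp

lemma ideal_Rle_mem: "ideal_in UNIV K \<Longrightarrow> Rle UNIV x y \<Longrightarrow> y \<in> K \<Longrightarrow> x \<in> K"
  by (auto simp: Rle_def ideal_in_def)

lemma kernel_floor:
  fixes K B :: "'a::semigroup_mult set"
  assumes K: "ideal_in UNIV K" "completely_simple K" and B: "bi_ideal B" and "a \<in> B"
  obtains c where "c \<in> B" "Rle UNIV c a"
    "\<And>x. x \<in> B \<Longrightarrow> Rle UNIV a x \<Longrightarrow> Rle UNIV x c \<Longrightarrow> Rle B x a"
proof (cases "a \<in> K")
  case True
  show thesis
  proof (rule that[of a])
    fix x assume "x \<in> B" "Rle UNIV x a"
    then show "Rle B x a"
      using completely_simple_Rle_bi_ideal[OF K(2) B] ideal_Rle_mem[OF K(1)] \<open>a \<in> B\<close> True by blast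
  qed (use \<open>a \<in> B\<close> in auto)
next
  case False
  obtain k where "k \<in> K" using K(1) by (auto simp: ideal_in_def)
  then have "a * k * a \<in> K" using K(1) by (simp add: ideal_in_def)
  show thesis
  proof (rule that[of "a * k * a"])
    show "a * k * a \<in> B" using B \<open>a \<in> B\<close> by (simp add: bi_ideal_def)
    show "Rle UNIV (a * k * a) a" by (auto simp: Rle_def mult.assoc)
  next
    fix x assume "Rle UNIV a x" "Rle UNIV x (a * k * a)"
    then have "a \<in> K"
      using ideal_Rle_mem[OF K(1)] \<open>a * k * a \<in> K\<close> by blast
    then show "Rle B x a" using False by blast
  qed
qed

lemma bi_ideal_descending_gap:
  fixes N i j :: nat
  assumes B: "bi_ideal B" and desc: "\<And>i j. i < j \<Longrightarrow> j < N \<Longrightarrow> Rless B (f j) (f i)"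
    and "i + 3 \<le> j" "j < N"
  shows "\<not> Rle UNIV (f i) (f j)"
proof
  assume le: "Rle UNIV (f i) (f j)"
  have "Rless B (f (i + 1)) (f i)" "Rless B (f j) (f (i + 2))"
    using desc assms(3,4) by simp_all
  then obtain u v where "u \<in> B" "f (i + 1) = f i * u" "v \<in> B" "f j = f (i + 2) * v"
    by (metis RlessE)
  then have "Rle B (f (i + 1)) (f (i + 2))"
    using bi_ideal_Rle_sandwich[OF B, of u v "f i" "f (i + 2)"] le by simp
  moreover have "Rless B (f (i + 2)) (f (i + 1))" using desc assms(3,4) by simp
  ultimately show False by (simp add: Rless_def)
qed

lemma descending_chain_compress:
  fixes K B :: "'a::semigroup_mult set" and N :: nat
  assumes K: "ideal_in UNIV K" "completely_simple K" and B: "bi_ideal B"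
    and "0 < N" and f: "f ` {..<N} \<subseteq> B"
    and desc: "\<And>i j. i < j \<Longrightarrow> j < N \<Longrightarrow> Rless B (f j) (f i)"
  obtains E where "finite E" "E \<subseteq> B" "R_strict_chain UNIV E" "N + 2 \<le> 3 * card E"
proof -
  have Rle_f: "Rle UNIV (f j) (f i)" if "i \<le> j" "j < N" for i j
    using desc[of i j] that Rle_mono[of B UNIV] by (cases "i = j") (auto simp: Rless_def)
  have "f (N - 1) \<in> B" using f \<open>0 < N\<close> by auto
  then obtain c where c: "c \<in> B" "Rle UNIV c (f (N - 1))"
    and c_floor: "\<And>x. x \<in> B \<Longrightarrow> Rle UNIV (f (N - 1)) x \<Longrightarrow> Rle UNIV x c \<Longrightarrow> Rle B x (f (N - 1))"
    using kernel_floor[OF K B] by blast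
  define q where "q = (N + 1) div 3"
  define g where "g k = f (3 * k)" for k
  have index: "3 * k + 1 < N" if "k < q" for k
    using that unfolding q_def by linarith
  have g_mem: "g k \<in> B" if "k < q" for k
    using f index[OF that] unfolding g_def by auto
  have g_chain: "Rless UNIV (g l) (g k)" if "k < l" "l < q" for k l
    using Rle_f[of "3 * k" "3 * l"] index[of l] that
      bi_ideal_descending_gap[where f = f and N = N and i = "3 * k" and j = "3 * l", OF B desc]
    unfolding g_def Rless_def by simp
  have c_below: "Rless UNIV c (g k)" if "k < q" for k
  proof -
    have "Rle UNIV (f (N - 1)) (g k)" using Rle_f index[OF that] unfolding g_def by simp
    moreover have "\<not> Rle B (g k) (f (N - 1))"
      using desc[of "3 * k" "N - 1"] index[OF that] unfolding g_def Rless_def by simp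
    ultimately show ?thesis
      using c c_floor[OF g_mem[OF that]] Rle_trans[of UNIV c "f (N - 1)" "g k"]
      unfolding Rless_def by auto
  qed
  define E where "E = insert c (g ` {..<q})"
  have "inj_on g {..<q}"
    by (rule inj_onI) (metis g_chain Rless_irrefl lessThan_iff linorder_neqE_nat)
  moreover have "c \<notin> g ` {..<q}" using c_below Rless_irrefl by blast
  ultimately have "card E = q + 1" unfolding E_def by (simp add: card_image)
  moreover have "R_strict_chain UNIV E"
    using c_below g_chain unfolding R_strict_chain_def E_def
    by (auto simp: lessThan_iff) (metis linorder_neqE_nat)+
  moreover have "E \<subseteq> B" using c g_mem unfolding E_def by auto
  ultimately show thesis using that[of E] unfolding E_def q_def by auto
qed

theorem theorem3p3:
  fixes K B :: "'a::semigroup_mult set" and n :: nat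
  assumes "R_height (UNIV :: 'a set) < \<infinity>"
    and "is_kernel K" and "completely_simple K"
    and "bi_ideal B"
    and "\<exists>C. finite C \<and> Rchain UNIV C \<and> (\<forall>X\<in>C. X \<inter> B \<noteq> {}) \<and> card C = n"
    and "\<And>C. finite C \<Longrightarrow> Rchain UNIV C \<Longrightarrow> (\<forall>X\<in>C. X \<inter> B \<noteq> {}) \<Longrightarrow> card C \<le> n"
  shows "R_height B \<le> enat (3 * n - 2)"
proof -
  have K: "ideal_in UNIV K" using assms(2) by (simp add: is_kernel_def)
  show ?thesis
  proof (rule R_height_le)
    fix C assume C: "finite C" "Rchain B C" "C \<noteq> {}"
    obtain f where f: "f ` {..<card C} \<subseteq> B"
      and desc: "\<And>i j. i < j \<Longrightarrow> j < card C \<Longrightarrow> Rless B (f j) (f i)"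
      using Rchain_descending_enumeration[OF bi_ideal_closed[OF assms(4)] C(1,2)] by blast
    have "0 < card C" using C(1,3) by (simp add: card_gt_0_iff)
    then obtain E where E: "finite E" "E \<subseteq> B" "R_strict_chain UNIV E" "card C + 2 \<le> 3 * card E"
      using descending_chain_compress[OF K assms(3,4) _ f desc] by blast
    have "\<forall>X\<in>Rclass UNIV ` E. X \<inter> B \<noteq> {}" using E(2) Rclass_self by blast
    then have "card (Rclass UNIV ` E) \<le> n"
      using assms(6) R_strict_chain_classes(1)[OF E(3)] E(1) by blast
    then have "card E \<le> n" using card_image[OF R_strict_chain_classes(2)[OF E(3)]] by simp
    then show "card C \<le> 3 * n - 2" using E(4) by linarith
  qed
qed

end
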